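(* Let $A$ be a balanced parenthesis sequence inducing the ordered matching $M$. Then $(A)$ is a balanced parenthesis sequence; let $M'$ be the matching it induces and let $|M'|$ denote the number of vertices of $M'$. Then $$r_<(M',K_3)\le r_<(M,K_3)+|M'|+1.$$
   Context: An ordered graph on $[N]$ is a graph with vertex set $\{1,\dots,N\}$ equipped with the natural order. Given a red/blue coloring of the edges of the complete graph on $[N]$, a red (ordered) copy of an ordered graph $G$ on $[p]$ is a strictly increasing map $\varphi:[p]\to[N]$ such that $\varphi(u)\varphi(v)$ is red for every edge $uv$ of $G$. The ordered Ramsey number $r_<(G,K_3)$ is the smallest $N$ such that every red/blue coloring of the edges of the complete graph on $[N]$ contains either a red ordered copy of $G$ or a blue triangle. A balanced parenthesis sequence of length $2m$ is a correctly matched string of $m$ open and $m$ close parentheses (possibly empty); it induces the ordered matching on $[2m]$ whose edges are the pairs $\{i,j\}$ such that the parenthesis at position $i$ is an open parenthesis matched with the close parenthesis at position $j$. *)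

theory Defs
  imports Main
begin

text \<open>Parenthesis sequences are bool lists: True = open parenthesis, False = close.
  Positions are 1-indexed: position i is the element xs ! (i - 1).\<close>

inductive balanced :: "bool list \<Rightarrow> bool" where
  bal_Nil: "balanced []"
| bal_wrap: "balanced A \<Longrightarrow> balanced (True # A @ [False])"
| bal_app: "balanced A \<Longrightarrow> balanced B \<Longrightarrow> balanced (A @ B)"

definition matching_edges :: "bool list \<Rightarrow> nat set set" where
  "matching_edges A = {{i, j} | i j. 1 \<le> i \<and> i < j \<and> j \<le> length A \<and>
      A ! (i - 1) \<and> \<not> A ! (j - 1) \<and> balanced (take (j - i - 1) (drop i A))}"

text \<open>An ordered graph on [p] is given by p and an edge set E of 2-subsets of {1..p}.
  A colouring of the complete graph on [N] is c :: nat set => bool, c {u,v} = True meaning red.\<close>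
definition red_ordered_copy ::
    "nat \<Rightarrow> nat set set \<Rightarrow> nat \<Rightarrow> (nat set \<Rightarrow> bool) \<Rightarrow> (nat \<Rightarrow> nat) \<Rightarrow> bool" where
  "red_ordered_copy p E N c \<phi> \<longleftrightarrow>
     strict_mono_on {1..p} \<phi> \<and> \<phi> ` {1..p} \<subseteq> {1..N} \<and> (\<forall>e\<in>E. c (\<phi> ` e))"

definition blue_triangle :: "nat \<Rightarrow> (nat set \<Rightarrow> bool) \<Rightarrow> bool" where
  "blue_triangle N c \<longleftrightarrow> (\<exists>a b d. 1 \<le> a \<and> a < b \<and> b < d \<and> d \<le> N \<and>
      \<not> c {a, b} \<and> \<not> c {b, d} \<and> \<not> c {a, d})"

definition ord_ramsey_K3 :: "nat \<Rightarrow> nat set set \<Rightarrow> nat" where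
  "ord_ramsey_K3 p E = (LEAST N. \<forall>c. (\<exists>\<phi>. red_ordered_copy p E N c \<phi>) \<or> blue_triangle N c)"

end

theory Submission
  imports Defs "HOL-Library.Infinite_Set"
begin

text \<open>
  Let \<open>n = r\<^sub><(M, K\<^sub>3)\<close>, \<open>q = |M'|\<close>, and colour the complete graph on \<open>[n + q + 1]\<close>
  without a blue triangle. Vertex \<open>1\<close> has \<open>n + q\<close> neighbours, so either \<open>q\<close> of them are
  blue neighbours, which then form a red clique and carry a red copy of any ordered graph on
  \<open>[q]\<close>, or \<open>n + 1\<close> of them are red neighbours. In the second case let \<open>b\<close> be the largest
  red neighbour; the other \<open>n\<close> contain a red copy of \<open>M\<close>, lying strictly between \<open>1\<close> and
  \<open>b\<close>, and adding the red edge \<open>{1, b}\<close> turns it into a copy of \<open>M'\<close>, whose edges are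
  those of \<open>M\<close> shifted by one together with the outer pair \<open>{1, q}\<close>. The same neighbourhood
  split shows that \<open>r\<^sub><(K\<^sub>p, K\<^sub>3)\<close> is finite, so all Ramsey numbers involved exist.
\<close>

definition height :: "bool list \<Rightarrow> int" where
  "height xs = (\<Sum>b\<leftarrow>xs. if b then 1 else -1)"

lemma height_simps [simp]:
  "height [] = 0"
  "height (b # xs) = (if b then 1 else -1) + height xs"
  "height (xs @ ys) = height xs + height ys"
  by (simp_all add: height_def)

lemma height_balanced: "balanced xs \<Longrightarrow> height xs = 0"
  by (induction rule: balanced.induct) simp_all

lemma height_take_balanced_nonneg: "balanced xs \<Longrightarrow> height (take k xs) \<ge> 0"
proof (induction arbitrary: k rule: balanced.induct)
  case bal_Nil
  then show ?case by simp
next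
  case (bal_wrap A)
  have body: "height (take k (A @ [False])) \<ge> -1" for k
    using bal_wrap.IH[of k] height_balanced[OF bal_wrap.hyps]
    by (cases "k \<le> length A") simp_all
  show ?case
  proof (cases k)
    case (Suc k')
    then show ?thesis using body[of k'] by simp
  qed simp
next
  case (bal_app A B)
  then show ?case using height_balanced[OF bal_app.hyps(1)] by (cases "k \<le> length A") simp_all
qed

lemma balanced_prefix_followed_by_open:
  assumes "balanced xs" "balanced (take k xs)" "k < length xs"
  shows "xs ! k"
proof -
  have "height (take (Suc k) xs) = height (take k xs) + (if xs ! k then 1 else -1)"
    using assms(3) by (simp add: take_Suc_conv_app_nth)
  then show ?thesis
    using height_take_balanced_nonneg[OF assms(1), of "Suc k"] height_balanced[OF assms(2)]
    by (auto split: if_splits)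
qed

lemma balanced_suffix_preceded_by_close:
  assumes "balanced xs" "balanced (drop (Suc k) xs)" "k < length xs"
  shows "\<not> xs ! k"
proof -
  have "height xs = height (take k xs) + (if xs ! k then 1 else -1) + height (drop (Suc k) xs)"
    using id_take_nth_drop[OF assms(3)] by (metis add.assoc height_simps(2,3))
  then show ?thesis
    using height_balanced[OF assms(1)] height_balanced[OF assms(2)]
      height_take_balanced_nonneg[OF assms(1), of k]
    by (auto split: if_splits)
qed

lemma matching_edges_wrap:
  assumes "balanced A"
  shows "matching_edges (True # A @ [False]) \<subseteq>
           insert {1, length A + 2} ((`) Suc ` matching_edges A)"
proof
  let ?W = "True # A @ [False]"
  fix e assume "e \<in> matching_edges ?W"
  then obtain i j where e: "e = {i, j}" and ij: "1 \<le> i" "i < j" "j \<le> length A + 2"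
    and open_i: "?W ! (i - 1)" and close_j: "\<not> ?W ! (j - 1)"
    and between: "balanced (take (j - i - 1) (drop i ?W))"
    unfolding matching_edges_def by auto
  consider "i = 1" "j = length A + 2" | "i = 1" "j \<le> length A + 1"
    | "2 \<le> i" "j = length A + 2" | "2 \<le> i" "j \<le> length A + 1"
    using ij by linarith
  then show "e \<in> insert {1, length A + 2} ((`) Suc ` matching_edges A)"
  proof cases
    case 1
    then show ?thesis using e by simp
  next
    case 2
    then have "j - 2 < length A" using ij by linarith
    moreover from this 2 have "balanced (take (j - 2) A)" "\<not> A ! (j - 2)"
      using ij between close_j by (simp_all add: nth_append numeral_2_eq_2)
    ultimately show ?thesis using balanced_prefix_followed_by_open[OF assms] by blast
  next
    case 3
    then have "i - 2 < length A" "Suc (i - 2) = i - 1" using ij by linarith+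
    moreover from this 3 have "balanced (drop (Suc (i - 2)) A)" "A ! (i - 2)"
      using between open_i by (simp_all add: nth_append drop_Cons' numeral_2_eq_2)
    ultimately show ?thesis using balanced_suffix_preceded_by_close[OF assms] by blast
  next
    case 4
    then have "i - 2 < length A" "j - 2 < length A" using ij by linarith+
    with 4 have "A ! (i - 1 - 1)" "\<not> A ! (j - 1 - 1)"
      "balanced (take (j - 1 - (i - 1) - 1) (drop (i - 1) A))"
      using ij between open_i close_j by (simp_all add: nth_append drop_Cons' numeral_2_eq_2)
    then have "{i - 1, j - 1} \<in> matching_edges A"
      using 4 ij unfolding matching_edges_def
      by (intro CollectI exI[of _ "i - 1"] exI[of _ "j - 1"]) (auto simp: numeral_2_eq_2)
    moreover have "e = Suc ` {i - 1, j - 1}" using e 4 ij by auto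
    ultimately show ?thesis by blast
  qed
qed

definition red_clique :: "'a set \<Rightarrow> ('a set \<Rightarrow> bool) \<Rightarrow> bool" where
  "red_clique K c \<longleftrightarrow> (\<forall>x\<in>K. \<forall>y\<in>K. x \<noteq> y \<longrightarrow> c {x, y})"

lemma red_clique_subset: "red_clique K c \<Longrightarrow> L \<subseteq> K \<Longrightarrow> red_clique L c"
  unfolding red_clique_def by blast

definition blue_triangle_free :: "'a set \<Rightarrow> ('a set \<Rightarrow> bool) \<Rightarrow> bool" where
  "blue_triangle_free S c \<longleftrightarrow> (\<forall>a\<in>S. \<forall>b\<in>S. \<forall>d\<in>S.
     a \<noteq> b \<longrightarrow> b \<noteq> d \<longrightarrow> a \<noteq> d \<longrightarrow> c {a, b} \<or> c {b, d} \<or> c {a, d})"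

lemma blue_triangle_free_subset:
  "blue_triangle_free S c \<Longrightarrow> T \<subseteq> S \<Longrightarrow> blue_triangle_free T c"
  unfolding blue_triangle_free_def by blast

lemma blue_triangle_free_pullback:
  assumes "blue_triangle_free S c" "inj_on f T" "f ` T \<subseteq> S"
  shows "blue_triangle_free T (\<lambda>X. c (f ` X))"
  unfolding blue_triangle_free_def
proof (intro ballI impI)
  fix a b d assume abd: "a \<in> T" "b \<in> T" "d \<in> T" "a \<noteq> b" "b \<noteq> d" "a \<noteq> d"
  then have "f a \<noteq> f b" "f b \<noteq> f d" "f a \<noteq> f d"
    using assms(2) by (auto dest: inj_onD)
  then show "c (f ` {a, b}) \<or> c (f ` {b, d}) \<or> c (f ` {a, d})"
    using assms(1)[unfolded blue_triangle_free_def, rule_format, of "f a" "f b" "f d"] assms(3) abd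
    by auto
qed

lemma blue_triangle_free_atLeastAtMost_iff:
  "blue_triangle_free {1..N} c \<longleftrightarrow> \<not> blue_triangle N c"
proof
  assume free: "blue_triangle_free {1..N} c"
  show "\<not> blue_triangle N c"
  proof
    assume "blue_triangle N c"
    then obtain a b d where "1 \<le> a" "a < b" "b < d" "d \<le> N" "\<not> c {a, b}" "\<not> c {b, d}" "\<not> c {a, d}"
      unfolding blue_triangle_def by blast
    then show False
      using free[unfolded blue_triangle_free_def, rule_format, of a b d] by auto
  qed
next
  assume no_blue: "\<not> blue_triangle N c"
  have increasing: "c {a, b} \<or> c {b, d} \<or> c {a, d}"
    if "1 \<le> a" "a < b" "b < d" "d \<le> N" for a b d
    using no_blue that unfolding blue_triangle_def by blast
  have ordered_pair: "c {a, b} \<or> c {b, d} \<or> c {a, d}"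
    if "a < b" "a \<in> {1..N}" "b \<in> {1..N}" "d \<in> {1..N}" "d \<noteq> a" "d \<noteq> b" for a b d
    using that increasing[of d a b] increasing[of a d b] increasing[of a b d]
    by (cases d a rule: linorder_cases; cases d b rule: linorder_cases) (auto simp: insert_commute)
  show "blue_triangle_free {1..N} c"
    unfolding blue_triangle_free_def
  proof (intro ballI impI)
    fix a b d assume "a \<in> {1..N}" "b \<in> {1..N}" "d \<in> {1..N}" "a \<noteq> b" "b \<noteq> d" "a \<noteq> d"
    then show "c {a, b} \<or> c {b, d} \<or> c {a, d}"
      using ordered_pair[of a b d] ordered_pair[of b a d]
      by (cases a b rule: linorder_cases) (auto simp: insert_commute)
  qed
qed

lemma red_clique_blue_neighbours:
  assumes "blue_triangle_free S c" "v \<in> S"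
  shows "red_clique {y \<in> S - {v}. \<not> c {v, y}} c"
  unfolding red_clique_def
proof (intro ballI impI)
  fix x y assume "x \<in> {y \<in> S - {v}. \<not> c {v, y}}" "y \<in> {y \<in> S - {v}. \<not> c {v, y}}" "x \<noteq> y"
  then show "c {x, y}"
    using assms(1)[unfolded blue_triangle_free_def, rule_format, of v x y] assms(2) by auto
qed

lemma red_clique_or_many_red_neighbours:
  assumes "blue_triangle_free S c" "finite S" "v \<in> S" "m + n \<le> card S"
  shows "(\<exists>K \<subseteq> S - {v}. card K = m \<and> red_clique K c) \<or> n \<le> card {y \<in> S - {v}. c {v, y}}"
proof -
  define B where "B = {y \<in> S - {v}. \<not> c {v, y}}"
  define R where "R = {y \<in> S - {v}. c {v, y}}"
  have "B \<union> R = S - {v}" "B \<inter> R = {}" "finite B" "finite R"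
    using assms(2) by (auto simp: B_def R_def)
  then have "card B + card R = card (S - {v})"
    by (metis card_Un_disjoint)
  then consider "m \<le> card B" | "n \<le> card R"
    using assms(3,4) card_Diff_singleton[OF assms(3)] by linarith
  then show ?thesis
  proof cases
    case 1
    then obtain K where K: "K \<subseteq> B" "card K = m" by (meson obtain_subset_with_card_n)
    have "red_clique B c"
      unfolding B_def using red_clique_blue_neighbours[OF assms(1,3)] .
    then have "red_clique K c" using K(1) by (rule red_clique_subset)
    moreover have "K \<subseteq> S - {v}" using K(1) by (auto simp: B_def)
    ultimately show ?thesis using K(2) by blast
  qed (simp add: R_def)
qed

lemma large_blue_triangle_free_has_red_clique:
  "\<exists>N. \<forall>(S :: 'a set) c. finite S \<longrightarrow> N \<le> card S \<longrightarrow> blue_triangle_free S c \<longrightarrow>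
      (\<exists>K \<subseteq> S. card K = p \<and> red_clique K c)"
proof (induction p)
  case 0
  show ?case by (intro exI[of _ 0] allI impI exI[of _ "{}"]) (simp add: red_clique_def)
next
  case (Suc p)
  then obtain N where N: "\<And>(S :: 'a set) c. finite S \<Longrightarrow> N \<le> card S \<Longrightarrow> blue_triangle_free S c
      \<Longrightarrow> \<exists>K \<subseteq> S. card K = p \<and> red_clique K c"
    by blast
  show ?case
  proof (intro exI[of _ "Suc p + N"] allI impI)
    fix S :: "'a set" and c
    assume S: "finite S" "Suc p + N \<le> card S" and free: "blue_triangle_free S c"
    then obtain v where v: "v \<in> S" by fastforce
    define R where "R = {y \<in> S - {v}. c {v, y}}"
    from red_clique_or_many_red_neighbours[OF free S(1) v S(2)]
    consider "\<exists>K \<subseteq> S - {v}. card K = Suc p \<and> red_clique K c" | "N \<le> card R"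
      unfolding R_def by blast
    then show "\<exists>K \<subseteq> S. card K = Suc p \<and> red_clique K c"
    proof cases
      case 2
      have "finite R" "blue_triangle_free R c"
        using S(1) blue_triangle_free_subset[OF free] by (auto simp: R_def)
      then obtain K where K: "K \<subseteq> R" "card K = p" "red_clique K c"
        using N 2 by blast
      have "insert v K \<subseteq> S" "v \<notin> K" "finite K"
        using K(1) v \<open>finite R\<close> finite_subset by (auto simp: R_def)
      moreover have "red_clique (insert v K) c"
        using K(1,3) unfolding red_clique_def R_def by (auto simp: insert_commute)
      ultimately show ?thesis using K(2) by (intro exI[of _ "insert v K"]) simp
    qed blast
  qed
qed

definition ordered_graph_on :: "nat \<Rightarrow> nat set set \<Rightarrow> bool" where
  "ordered_graph_on p E \<longleftrightarrow> E \<subseteq> {{i, j} | i j. 1 \<le> i \<and> i < j \<and> j \<le> p}"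

lemma ordered_graph_on_matching_edges: "ordered_graph_on (length A) (matching_edges A)"
  unfolding ordered_graph_on_def matching_edges_def by blast

definition red_embedding ::
    "nat \<Rightarrow> nat set set \<Rightarrow> nat set \<Rightarrow> (nat set \<Rightarrow> bool) \<Rightarrow> (nat \<Rightarrow> nat) \<Rightarrow> bool" where
  "red_embedding p E S c \<psi> \<longleftrightarrow>
     strict_mono_on {1..p} \<psi> \<and> \<psi> ` {1..p} \<subseteq> S \<and> (\<forall>e\<in>E. c (\<psi> ` e))"

lemma red_ordered_copy_eq_red_embedding: "red_ordered_copy p E N = red_embedding p E {1..N}"
  by (simp add: fun_eq_iff red_ordered_copy_def red_embedding_def)

lemma red_embedding_mono: "red_embedding p E S c \<psi> \<Longrightarrow> S \<subseteq> T \<Longrightarrow> red_embedding p E T c \<psi>"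
  unfolding red_embedding_def by blast

lemma strict_mono_enumeration:
  fixes S :: "'a::wellorder set"
  assumes "finite S" "n \<le> card S"
  shows "\<exists>f. strict_mono_on {1..n} f \<and> f ` {1..n} \<subseteq> S"
proof (intro exI conjI)
  show "strict_mono_on {1..n} (\<lambda>i. enumerate S (i - 1))"
    using assms by (intro strict_mono_onI finite_enumerate_mono) auto
  show "(\<lambda>i. enumerate S (i - 1)) ` {1..n} \<subseteq> S"
    using assms by (auto intro!: finite_enumerate_in_set)
qed

lemma red_embedding_into_red_clique:
  assumes "ordered_graph_on p E" "finite K" "p \<le> card K" "red_clique K c" "K \<subseteq> S"
  shows "\<exists>\<psi>. red_embedding p E S c \<psi>"
proof -
  obtain f where f: "strict_mono_on {1..p} f" "f ` {1..p} \<subseteq> K"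
    using strict_mono_enumeration[OF assms(2,3)] by blast
  have "c (f ` e)" if "e \<in> E" for e
  proof -
    obtain i j where "e = {i, j}" "1 \<le> i" "i < j" "j \<le> p"
      using assms(1) \<open>e \<in> E\<close> unfolding ordered_graph_on_def by blast
    moreover from this have "f i < f j" "f i \<in> K" "f j \<in> K"
      using f(2) by (auto intro: strict_mono_onD[OF f(1)])
    ultimately show ?thesis using assms(4) unfolding red_clique_def by auto
  qed
  then show ?thesis using f assms(5) unfolding red_embedding_def by blast
qed

lemma red_embedding_pullback:
  assumes "red_embedding p E {1..n} (\<lambda>X. c (f ` X)) \<phi>" "strict_mono_on {1..n} f" "f ` {1..n} \<subseteq> S"
  shows "red_embedding p E S c (f \<circ> \<phi>)"
proof -
  have \<phi>: "strict_mono_on {1..p} \<phi>" "\<phi> ` {1..p} \<subseteq> {1..n}" "\<forall>e\<in>E. c (f ` \<phi> ` e)"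
    using assms(1) unfolding red_embedding_def by auto
  then show ?thesis
    using monotone_on_o[OF assms(2) \<phi>(1,2)] assms(3) unfolding red_embedding_def
    by (auto simp: image_comp)
qed

definition arrows_K3 :: "nat \<Rightarrow> nat set set \<Rightarrow> nat \<Rightarrow> bool" where
  "arrows_K3 p E N \<longleftrightarrow> (\<forall>c. (\<exists>\<phi>. red_ordered_copy p E N c \<phi>) \<or> blue_triangle N c)"

lemma arrows_K3_iff:
  "arrows_K3 p E N \<longleftrightarrow>
     (\<forall>c. blue_triangle_free {1..N} c \<longrightarrow> (\<exists>\<phi>. red_embedding p E {1..N} c \<phi>))"
  unfolding arrows_K3_def blue_triangle_free_atLeastAtMost_iff red_ordered_copy_eq_red_embedding
  by blast

lemma ord_ramsey_K3_le: "arrows_K3 p E N \<Longrightarrow> ord_ramsey_K3 p E \<le> N"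
  unfolding ord_ramsey_K3_def arrows_K3_def by (rule Least_le)

lemma arrows_K3_red_embedding:
  assumes "arrows_K3 p E n" "finite S" "n \<le> card S" "blue_triangle_free S c"
  shows "\<exists>\<psi>. red_embedding p E S c \<psi>"
proof -
  obtain f where f: "strict_mono_on {1..n} f" "f ` {1..n} \<subseteq> S"
    using strict_mono_enumeration[OF assms(2,3)] by blast
  have "blue_triangle_free {1..n} (\<lambda>X. c (f ` X))"
    using blue_triangle_free_pullback[OF assms(4) strict_mono_on_imp_inj_on[OF f(1)] f(2)] .
  then obtain \<phi> where "red_embedding p E {1..n} (\<lambda>X. c (f ` X)) \<phi>"
    using assms(1) unfolding arrows_K3_iff by blast
  then show ?thesis using red_embedding_pullback f by blast
qed

lemma arrows_K3_red_embedding_below_Max: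
  assumes "arrows_K3 p E n" "finite R" "n < card R" "blue_triangle_free R c"
  shows "\<exists>\<psi>. red_embedding p E {y \<in> R. y < Max R} c \<psi>"
proof (rule arrows_K3_red_embedding[OF assms(1)])
  have "{y \<in> R. y < Max R} = R - {Max R}"
    using Max_ge[OF assms(2)] by (auto simp: less_le)
  moreover have "Max R \<in> R" using assms(2,3) by (intro Max_in) auto
  ultimately show "n \<le> card {y \<in> R. y < Max R}" using assms(2,3) by simp
  show "blue_triangle_free {y \<in> R. y < Max R} c"
    using assms(4) by (rule blue_triangle_free_subset) blast
qed simp

lemma arrows_K3_exists:
  assumes "ordered_graph_on p E"
  shows "\<exists>N. arrows_K3 p E N"
proof -
  obtain N where N: "\<And>(S :: nat set) c. finite S \<Longrightarrow> N \<le> card S \<Longrightarrow> blue_triangle_free S c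
      \<Longrightarrow> \<exists>K \<subseteq> S. card K = p \<and> red_clique K c"
    using large_blue_triangle_free_has_red_clique by blast
  have "arrows_K3 p E N"
    unfolding arrows_K3_iff
  proof (intro allI impI)
    fix c assume "blue_triangle_free {1..N} c"
    then obtain K where K: "K \<subseteq> {1..N}" "card K = p" "red_clique K c"
      using N[of "{1..N}"] by auto
    moreover from K(1) have "finite K" by (rule finite_subset) simp
    ultimately show "\<exists>\<phi>. red_embedding p E {1..N} c \<phi>"
      using red_embedding_into_red_clique[OF assms] by (metis order_refl)
  qed
  then show ?thesis ..
qed

text \<open>Without the existence of some admissible \<open>N\<close>, \<open>LEAST\<close> would return a junk value.\<close>
lemma arrows_K3_ord_ramsey_K3:
  "ordered_graph_on p E \<Longrightarrow> arrows_K3 p E (ord_ramsey_K3 p E)"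
  unfolding ord_ramsey_K3_def arrows_K3_def[symmetric] by (rule LeastI_ex[OF arrows_K3_exists])

lemma strict_mono_on_extend:
  fixes \<psi> :: "nat \<Rightarrow> 'a::order"
  assumes "strict_mono_on {1..p} \<psi>" "\<psi> ` {1..p} \<subseteq> {a<..<b}" "a < b"
  shows "strict_mono_on {1..p + 2} (\<lambda>i. if i = 1 then a else if i = p + 2 then b else \<psi> (i - 1))"
proof (rule strict_mono_onI)
  fix r s assume rs: "r \<in> {1..p + 2}" "s \<in> {1..p + 2}" "r < s"
  have inner: "\<psi> (i - 1) \<in> {a<..<b}" if "1 < i" "i < p + 2" for i
    using assms(2) that by (intro subsetD[OF assms(2)] imageI) auto
  show "(if r = 1 then a else if r = p + 2 then b else \<psi> (r - 1))
      < (if s = 1 then a else if s = p + 2 then b else \<psi> (s - 1))"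
    using rs assms(3) inner[of r] inner[of s] strict_mono_onD[OF assms(1), of "r - 1" "s - 1"]
    by auto
qed

lemma red_embedding_wrap:
  assumes "balanced A" "red_embedding (length A) (matching_edges A) {a<..<b} c \<psi>"
    and "a < b" "c {a, b}"
  shows "red_embedding (length A + 2) (matching_edges (True # A @ [False])) {a..b} c
           (\<lambda>i. if i = 1 then a else if i = length A + 2 then b else \<psi> (i - 1))"
    (is "red_embedding _ _ _ _ ?\<phi>")
proof -
  have \<psi>: "strict_mono_on {1..length A} \<psi>" "\<psi> ` {1..length A} \<subseteq> {a<..<b}"
    "\<forall>e\<in>matching_edges A. c (\<psi> ` e)"
    using assms(2) unfolding red_embedding_def by auto
  have red: "c (?\<phi> ` e)" if e: "e \<in> matching_edges (True # A @ [False])" for e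
  proof -
    consider "e = {1, length A + 2}" | e\<^sub>0 where "e\<^sub>0 \<in> matching_edges A" "e = Suc ` e\<^sub>0"
      using matching_edges_wrap[OF assms(1)] e by blast
    then show ?thesis
    proof cases
      case 1
      then show ?thesis using assms(4) by (simp add: insert_commute)
    next
      case (2 e\<^sub>0)
      then obtain i j where "e\<^sub>0 = {i, j}" "1 \<le> i" "i < j" "j \<le> length A"
        using ordered_graph_on_matching_edges[of A] unfolding ordered_graph_on_def by blast
      then have "?\<phi> ` e = \<psi> ` e\<^sub>0" using 2(2) by auto
      then show ?thesis using \<psi>(3) 2(1) by simp
    qed
  qed
  have "?\<phi> ` {1..length A + 2} \<subseteq> insert a (insert b (\<psi> ` {1..length A}))"
    by (auto intro!: imageI)
  then have "?\<phi> ` {1..length A + 2} \<subseteq> {a..b}"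
    using \<psi>(2) assms(3) by fastforce
  then show ?thesis
    using strict_mono_on_extend[OF \<psi>(1,2) assms(3)] red unfolding red_embedding_def by blast
qed

lemma arrows_K3_wrap:
  assumes "balanced A" "arrows_K3 (length A) (matching_edges A) n"
  shows "arrows_K3 (length A + 2) (matching_edges (True # A @ [False])) (n + (length A + 2) + 1)"
  unfolding arrows_K3_iff
proof (intro allI impI)
  let ?q = "length A + 2" and ?N = "n + (length A + 2) + 1"
  fix c assume free: "blue_triangle_free {1..?N} c"
  define R where "R = {y \<in> {1..?N} - {1}. c {1, y}}"
  have "finite R" by (simp add: R_def)
  from red_clique_or_many_red_neighbours[OF free finite_atLeastAtMost, of 1 ?q "Suc n"]
  consider K where "K \<subseteq> {1..?N} - {1}" "card K = ?q" "red_clique K c" | "Suc n \<le> card R"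
    unfolding R_def by auto
  then show "\<exists>\<phi>. red_embedding ?q (matching_edges (True # A @ [False])) {1..?N} c \<phi>"
  proof cases
    case (1 K)
    then have "K \<subseteq> {1..?N}" "finite K" by (auto intro: finite_subset)
    moreover have "ordered_graph_on ?q (matching_edges (True # A @ [False]))"
      using ordered_graph_on_matching_edges[of "True # A @ [False]"] by simp
    ultimately show ?thesis
      using red_embedding_into_red_clique 1(2,3) by (metis order_refl)
  next
    case 2
    define b where "b = Max R"
    have "b \<in> R" using 2 \<open>finite R\<close> unfolding b_def by (intro Max_in) auto
    then have b: "1 < b" "b \<le> ?N" "c {1, b}" by (auto simp: R_def)
    have "blue_triangle_free R c"
      using free by (rule blue_triangle_free_subset) (auto simp: R_def)
    then obtain \<psi> where "red_embedding (length A) (matching_edges A) {y \<in> R. y < b} c \<psi>"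
      using arrows_K3_red_embedding_below_Max[OF assms(2) \<open>finite R\<close>] 2 unfolding b_def by auto
    moreover have "{y \<in> R. y < b} \<subseteq> {1<..<b}" by (auto simp: R_def)
    ultimately have "red_embedding (length A) (matching_edges A) {1<..<b} c \<psi>"
      by (rule red_embedding_mono)
    from assms(1) this b(1,3)
    have "red_embedding ?q (matching_edges (True # A @ [False])) {1..b} c
        (\<lambda>i. if i = 1 then 1 else if i = ?q then b else \<psi> (i - 1))"
      by (rule red_embedding_wrap)
    moreover have "{1..b} \<subseteq> {1..?N}" using b(2) by auto
    ultimately show ?thesis by (blast intro: red_embedding_mono)
  qed
qed

theorem lemma2p5:
  assumes "balanced A"
  shows "balanced (True # A @ [False]) \<and>
    ord_ramsey_K3 (length (True # A @ [False])) (matching_edges (True # A @ [False]))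
      \<le> ord_ramsey_K3 (length A) (matching_edges A) + length (True # A @ [False]) + 1"
proof
  show "balanced (True # A @ [False])" using assms by (rule bal_wrap)
  have "arrows_K3 (length A) (matching_edges A) (ord_ramsey_K3 (length A) (matching_edges A))"
    using arrows_K3_ord_ramsey_K3[OF ordered_graph_on_matching_edges] .
  then show "ord_ramsey_K3 (length (True # A @ [False])) (matching_edges (True # A @ [False]))
      \<le> ord_ramsey_K3 (length A) (matching_edges A) + length (True # A @ [False]) + 1"
    using arrows_K3_wrap[OF assms] ord_ramsey_K3_le by simp
qed

end
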